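(* Let $d\ge 2$ and let $\mu$ be a minimizer, over all Borel probability measures on $\mathbb{S}^{d-1}$, of the three-point $1$-frame energy $$I(\mu)=\int_{\mathbb{S}^{d-1}}\int_{\mathbb{S}^{d-1}}\int_{\mathbb{S}^{d-1}}\left|\langle x,y\rangle\langle x,z\rangle\langle y,z\rangle\right|\,d\mu(x)\,d\mu(y)\,d\mu(z).$$ Then for every $x$ in the support of $\mu$ there exists $y$ in the support of $\mu$ with $\langle x,y\rangle=0$.
   Context: $\mathbb{S}^{d-1}$ is the unit sphere of $\mathbb{R}^d$ and $\langle\cdot,\cdot\rangle$ the Euclidean inner product. *)

theory Defs
  imports "HOL-Probability.Probability"
begin

definition sphere_borel_prob :: "'a::euclidean_space measure \<Rightarrow> bool" where
  "sphere_borel_prob \<mu> \<longleftrightarrow>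
     prob_space \<mu> \<and> sets \<mu> = sets borel \<and> emeasure \<mu> (sphere 0 1) = 1"

definition frame_energy3 :: "'a::euclidean_space measure \<Rightarrow> ennreal" where
  "frame_energy3 \<mu> =
     (\<integral>\<^sup>+ x. \<integral>\<^sup>+ y. \<integral>\<^sup>+ z. ennreal \<bar>(x \<bullet> y) * (x \<bullet> z) * (y \<bullet> z)\<bar> \<partial>\<mu> \<partial>\<mu> \<partial>\<mu>)"

definition msupport :: "'a::metric_space measure \<Rightarrow> 'a set" where
  "msupport \<mu> = {x. \<forall>e>0. emeasure \<mu> (ball x e) > 0}"

end

theory Submission
  imports Defs
begin

text \<open>Let \<open>F u = \<integral> \<langle>y,u\<rangle> y d\<mu>(y)\<close> be the frame operator of a probability measure \<open>\<mu>\<close> on the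
  sphere; it is symmetric with trace 1. Integrating out \<open>z\<close> and then \<open>y\<close> turns the signed energy
  \<open>\<integral>\<integral>\<integral> \<langle>x,y\<rangle>\<langle>x,z\<rangle>\<langle>y,z\<rangle>\<close> into \<open>\<integral> |F x|\<^sup>2\<close>, which by Cauchy-Schwarz and Jensen is at
  least \<open>(\<integral> \<langle>x,F x\<rangle>)\<^sup>2 = (tr F\<^sup>2)\<^sup>2 \<ge> 1/d\<^sup>2\<close>. The uniform measure on an orthonormal basis has energy
  exactly \<open>1/d\<^sup>2\<close>, so for a minimizer all these inequalities are equalities: the triple product is
  nonnegative on the support and \<open>F = I/d\<close>.

  Now let \<open>x\<close> be a support point with no orthogonal partner and flip every \<open>y\<close> to
  \<open>sgn \<langle>x,y\<rangle> y\<close>; let \<open>m\<close> be the mean of the flipped measure. On the support the flipped inner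
  products \<open>t\<close> lie in \<open>[0,1]\<close>, and integrating \<open>t - t\<^sup>2 \<ge> 0\<close> over \<open>c\<close> gives
  \<open>sgn \<langle>x,b\<rangle> \<langle>b,m\<rangle> \<ge> 1/d\<close> for every support point \<open>b\<close>. The integral over \<open>b\<close> of the left side is
  \<open>|m|\<^sup>2\<close>, and Jensen gives \<open>|m|\<^sup>4 \<le> \<langle>m,F m\<rangle> = |m|\<^sup>2/d\<close>, so equality holds almost everywhere and,
  by continuity, at \<open>b = x\<close>. There it reads \<open>\<integral> |\<langle>x,c\<rangle>| = 1/d = \<integral> \<langle>x,c\<rangle>\<^sup>2\<close>, forcing
  \<open>|\<langle>x,c\<rangle>| = 1\<close> almost everywhere; then \<open>1/d = \<langle>x,F x\<rangle> = 1\<close>, impossible for \<open>d \<ge> 2\<close>.\<close>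

lemma sets_pair_measure_borel:
  fixes N :: "'a::second_countable_topology measure" and K :: "'b::second_countable_topology measure"
  shows "sets N = sets borel \<Longrightarrow> sets K = sets borel \<Longrightarrow> sets (N \<Otimes>\<^sub>M K) = sets borel"
  using sets_pair_measure_cong[of N borel K borel] unfolding borel_prod by blast

lemma borel_measurable_continuous_on_UNIV:
  "sets N = sets borel \<Longrightarrow> continuous_on UNIV f \<Longrightarrow> f \<in> borel_measurable N"
  using borel_measurable_continuous_onI measurable_cong_sets[OF _ refl] by blast

lemma sgn_mult_sgn_mult_nonneg:
  fixes p q t :: real
  assumes "0 \<le> p * q * t"
  shows "0 \<le> sgn p * sgn q * t"
  using assms by (auto simp: sgn_real_def zero_le_mult_iff mult_le_0_iff)

lemma abs_sgn_mult_le: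
  fixes s t :: real
  shows "\<bar>sgn s * t\<bar> \<le> \<bar>t\<bar>"
  by (simp add: abs_mult sgn_real_def)

locale sphere_prob_space =
  fixes M :: "'a::euclidean_space measure"
  assumes sphere_borel_prob: "sphere_borel_prob M"
begin

sublocale prob_space M
  using sphere_borel_prob unfolding sphere_borel_prob_def by auto

lemma sets_eq_borel: "sets M = sets borel"
  using sphere_borel_prob unfolding sphere_borel_prob_def by auto

lemma space_eq_UNIV: "space M = UNIV"
  using sets_eq_imp_space_eq[OF sets_eq_borel] by simp

lemma borel_measurable_inner_left [measurable]: "(\<lambda>y. v \<bullet> y) \<in> borel_measurable M"
  by (intro borel_measurable_continuous_on_UNIV sets_eq_borel continuous_intros)

lemma borel_measurable_sgn_inner [measurable]: "(\<lambda>y. sgn (v \<bullet> y)) \<in> borel_measurable M"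
  by (intro measurable_compose[OF borel_measurable_inner_left borel_measurable_sgn])

lemma AE_norm_eq_1: "AE y in M. norm y = 1"
proof -
  have "emeasure M (sphere 0 1) = 1"
    using sphere_borel_prob unfolding sphere_borel_prob_def by auto
  then have "prob (sphere 0 1) = 1"
    using sets_eq_borel by (simp add: emeasure_eq_measure)
  from AE_prob_1[OF this] show ?thesis
    by eventually_elim simp
qed

lemma integrable_bounded_on_sphere:
  fixes f :: "'a \<Rightarrow> 'b::{banach,second_countable_topology}"
  assumes "f \<in> borel_measurable M" and "\<And>y. norm y = 1 \<Longrightarrow> norm (f y) \<le> B"
  shows "integrable M f"
  using AE_norm_eq_1 assms by (intro integrable_const_bound[where B = B]) auto

lemma abs_integral_le_bound_on_sphere:
  fixes f :: "'a \<Rightarrow> real"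
  assumes "integrable M f" and "\<And>y. norm y = 1 \<Longrightarrow> \<bar>f y\<bar> \<le> B"
  shows "\<bar>integral\<^sup>L M f\<bar> \<le> B"
proof -
  have "\<bar>integral\<^sup>L M f\<bar> \<le> (\<integral>y. \<bar>f y\<bar> \<partial>M)"
    by (rule integral_abs_bound)
  also have "\<dots> \<le> (\<integral>y. B \<partial>M)"
    using AE_norm_eq_1 assms by (intro integral_mono_AE) auto
  finally show ?thesis
    by (simp add: prob_space)
qed

lemma integrable_continuous:
  fixes f :: "'a \<Rightarrow> 'b::{banach,second_countable_topology}"
  assumes "continuous_on UNIV f"
  shows "integrable M f"
proof -
  obtain B where "\<And>y. y \<in> sphere 0 1 \<Longrightarrow> norm (f y) \<le> B"
    using continuous_on_compact_bound[OF compact_sphere continuous_on_subset[OF assms]] by blast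
  then show ?thesis
    by (intro integrable_bounded_on_sphere[of f B] borel_measurable_continuous_on_UNIV
        sets_eq_borel assms) auto
qed

lemma square_integral_le_integral_square:
  fixes f :: "'a \<Rightarrow> real"
  assumes "integrable M f" and "integrable M (\<lambda>y. (f y)\<^sup>2)"
  shows "(integral\<^sup>L M f)\<^sup>2 \<le> (\<integral>y. (f y)\<^sup>2 \<partial>M)"
  using variance_positive[of f] assms by (simp add: variance_eq)

lemma AE_in_support: "AE y in M. y \<in> msupport M"
proof -
  define N where "N = {ball x e |x e. e > 0 \<and> emeasure M (ball x e) = 0}"
  obtain N' where N': "N' \<subseteq> N" "countable N'" "\<Union>N' = \<Union>N"
    using Lindelof[of N] unfolding N_def by blast
  have "(\<Union>S\<in>N'. S) \<in> null_sets M"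
    using N'(1) sets_eq_borel unfolding N_def
    by (intro null_sets_UN'[OF N'(2)]) (auto simp: null_sets_def)
  moreover have "{y \<in> space M. y \<notin> msupport M} \<subseteq> \<Union>N"
    unfolding N_def msupport_def by (force simp: zero_less_iff_neq_zero)
  ultimately show ?thesis
    using N'(3) by (intro AE_I') auto
qed

lemma AE_closed_imp_support:
  assumes "AE y in M. P y" and "closed {y. P y}" and "x \<in> msupport M"
  shows "P x"
proof (rule ccontr)
  assume "\<not> P x"
  then obtain e where e: "e > 0" "ball x e \<inter> {y. P y} = {}"
    using assms(2) unfolding closed_def open_contains_ball by blast
  from assms(1) have "AE y in M. y \<notin> ball x e"
    by eventually_elim (use e(2) in auto)
  then have "emeasure M {y \<in> space M. y \<in> ball x e} = 0"
    by (rule emeasure_eq_0_AE)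
  then have "emeasure M (ball x e) = 0"
    by (simp add: space_eq_UNIV ball_def)
  with e(1) assms(3) show False
    unfolding msupport_def by auto
qed

lemma norm_in_support: "x \<in> msupport M \<Longrightarrow> norm x = 1"
  by (rule AE_closed_imp_support[OF AE_norm_eq_1]) (intro closed_Collect_eq continuous_intros)

lemma integrable_iterated_1:
  fixes f :: "'a \<Rightarrow> 'a \<Rightarrow> 'a \<Rightarrow> real"
  assumes cont: "continuous_on UNIV (\<lambda>((a, b), c). f a b c)"
  shows "integrable M (\<lambda>c. f a b c)"
proof -
  have "continuous_on UNIV (\<lambda>c. (\<lambda>((a, b), c). f a b c) ((a, b), c))"
    by (intro continuous_on_compose2[OF cont] continuous_intros) auto
  then show ?thesis
    by (simp add: integrable_continuous)
qed

lemma integrable_iterated_2: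
  fixes f :: "'a \<Rightarrow> 'a \<Rightarrow> 'a \<Rightarrow> real"
  assumes cont: "continuous_on UNIV (\<lambda>((a, b), c). f a b c)"
  shows "integrable M (\<lambda>b. \<integral>c. f a b c \<partial>M)"
proof -
  let ?S = "sphere (0::'a) 1"
  have "continuous_on UNIV (\<lambda>p. (\<lambda>((a, b), c). f a b c) ((a, fst p), snd p))"
    by (intro continuous_on_compose2[OF cont] continuous_intros) auto
  then have "(\<lambda>(b, c). f a b c) \<in> borel_measurable (M \<Otimes>\<^sub>M M)"
    using borel_measurable_continuous_on_UNIV[OF sets_pair_measure_borel[OF sets_eq_borel sets_eq_borel]]
    by (simp add: case_prod_unfold)
  then have meas: "(\<lambda>b. \<integral>c. f a b c \<partial>M) \<in> borel_measurable M"
    by (rule borel_measurable_lebesgue_integral)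
  have "compact (({a} \<times> ?S) \<times> ?S)"
    by (intro compact_Times compact_sphere compact_sing)
  then obtain B where B: "\<And>p. p \<in> ({a} \<times> ?S) \<times> ?S \<Longrightarrow> norm ((\<lambda>((a, b), c). f a b c) p) \<le> B"
    using continuous_on_compact_bound continuous_on_subset[OF cont subset_UNIV] by metis
  show ?thesis
  proof (rule integrable_bounded_on_sphere[OF meas, of B])
    fix b :: 'a assume "norm b = 1"
    then show "norm (\<integral>c. f a b c \<partial>M) \<le> B"
      using B[of "((a, b), _)"]
      by (simp, intro abs_integral_le_bound_on_sphere integrable_iterated_1[OF cont]) auto
  qed
qed

lemma integrable_iterated_3:
  fixes f :: "'a \<Rightarrow> 'a \<Rightarrow> 'a \<Rightarrow> real"
  assumes cont: "continuous_on UNIV (\<lambda>((a, b), c). f a b c)"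
  shows "integrable M (\<lambda>a. \<integral>b. \<integral>c. f a b c \<partial>M \<partial>M)"
proof -
  let ?S = "sphere (0::'a) 1"
  have "sets ((M \<Otimes>\<^sub>M M) \<Otimes>\<^sub>M M) = sets borel"
    by (intro sets_pair_measure_borel sets_eq_borel)
  then have "(\<lambda>((a, b), c). f a b c) \<in> borel_measurable ((M \<Otimes>\<^sub>M M) \<Otimes>\<^sub>M M)"
    using cont by (rule borel_measurable_continuous_on_UNIV)
  then have "(\<lambda>(a, b). \<integral>c. f a b c \<partial>M) \<in> borel_measurable (M \<Otimes>\<^sub>M M)"
    using borel_measurable_lebesgue_integral[where f = "\<lambda>(a, b) c. f a b c" and N = "M \<Otimes>\<^sub>M M"]
    by (simp add: case_prod_unfold)
  then have meas: "(\<lambda>a. \<integral>b. \<integral>c. f a b c \<partial>M \<partial>M) \<in> borel_measurable M"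
    by (rule borel_measurable_lebesgue_integral)
  have "compact ((?S \<times> ?S) \<times> ?S)"
    by (intro compact_Times compact_sphere)
  then obtain B where B: "\<And>p. p \<in> (?S \<times> ?S) \<times> ?S \<Longrightarrow> norm ((\<lambda>((a, b), c). f a b c) p) \<le> B"
    using continuous_on_compact_bound continuous_on_subset[OF cont subset_UNIV] by metis
  show ?thesis
  proof (rule integrable_bounded_on_sphere[OF meas, of B])
    fix a :: 'a assume "norm a = 1"
    then show "norm (\<integral>b. \<integral>c. f a b c \<partial>M \<partial>M) \<le> B"
      using B[of "((a, _), _)"]
      by (simp, intro abs_integral_le_bound_on_sphere integrable_iterated_2[OF cont],
          intro abs_integral_le_bound_on_sphere integrable_iterated_1[OF cont]) auto
  qed
qed

lemma nn_integral_iterated_eq_integral: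
  fixes f :: "'a \<Rightarrow> 'a \<Rightarrow> 'a \<Rightarrow> real"
  assumes cont: "continuous_on UNIV (\<lambda>((a, b), c). f a b c)" and nonneg: "\<And>a b c. 0 \<le> f a b c"
  shows "(\<integral>\<^sup>+a. \<integral>\<^sup>+b. \<integral>\<^sup>+c. ennreal (f a b c) \<partial>M \<partial>M \<partial>M)
    = ennreal (\<integral>a. \<integral>b. \<integral>c. f a b c \<partial>M \<partial>M \<partial>M)"
  using integrable_iterated_1[OF cont] integrable_iterated_2[OF cont] integrable_iterated_3[OF cont]
  by (simp add: nn_integral_eq_integral nonneg integral_nonneg)

lemma AE_iterated_eq_0:
  fixes f :: "'a \<Rightarrow> 'a \<Rightarrow> 'a \<Rightarrow> real"
  assumes cont: "continuous_on UNIV (\<lambda>((a, b), c). f a b c)" and nonneg: "\<And>a b c. 0 \<le> f a b c"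
    and zero: "(\<integral>a. \<integral>b. \<integral>c. f a b c \<partial>M \<partial>M \<partial>M) = 0"
  shows "AE a in M. AE b in M. AE c in M. f a b c = 0"
proof -
  have "AE a in M. (\<integral>b. \<integral>c. f a b c \<partial>M \<partial>M) = 0"
    using zero integral_nonneg_eq_0_iff_AE[OF integrable_iterated_3[OF cont]]
    by (simp add: nonneg integral_nonneg)
  then show ?thesis
  proof eventually_elim
    fix a assume "(\<integral>b. \<integral>c. f a b c \<partial>M \<partial>M) = 0"
    then have "AE b in M. (\<integral>c. f a b c \<partial>M) = 0"
      using integral_nonneg_eq_0_iff_AE[OF integrable_iterated_2[OF cont]]
      by (simp add: nonneg integral_nonneg)
    then show "AE b in M. AE c in M. f a b c = 0"
      by eventually_elim
        (use integral_nonneg_eq_0_iff_AE[OF integrable_iterated_1[OF cont]] nonneg in simp)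
  qed
qed

subsection \<open>The frame operator\<close>

definition frame_op :: "'a \<Rightarrow> 'a" where
  "frame_op u = (\<integral>y. (y \<bullet> u) *\<^sub>R y \<partial>M)"

definition frame_potential :: real where
  "frame_potential = (\<Sum>i\<in>Basis. frame_op i \<bullet> frame_op i)"

lemma integrable_frame_op: "integrable M (\<lambda>y. (y \<bullet> u) *\<^sub>R y)"
  by (intro integrable_continuous continuous_intros)

lemma inner_frame_op: "frame_op u \<bullet> v = (\<integral>y. (y \<bullet> u) * (y \<bullet> v) \<partial>M)"
  unfolding frame_op_def
  by (subst integral_inner_left[symmetric]) (simp_all add: integrable_frame_op)

lemma frame_op_sym: "frame_op u \<bullet> v = u \<bullet> frame_op v"
  by (simp add: inner_frame_op inner_commute[of u] mult.commute)

lemma linear_frame_op: "linear frame_op"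
  by (rule linearI)
    (simp_all add: frame_op_def inner_add_right scaleR_add_left integrable_frame_op
      flip: scaleR_scaleR)

lemma continuous_on_frame_op [continuous_intros]:
  "continuous_on S f \<Longrightarrow> continuous_on S (\<lambda>x. frame_op (f x))"
  using linear_frame_op by (simp add: linear_conv_bounded_linear bounded_linear.continuous_on)

lemma trace_frame_op: "(\<Sum>i\<in>Basis. i \<bullet> frame_op i) = 1"
proof -
  have "(\<Sum>i\<in>Basis. i \<bullet> frame_op i) = (\<integral>y. (\<Sum>i\<in>Basis. (y \<bullet> i) * (y \<bullet> i)) \<partial>M)"
    by (simp add: frame_op_sym[symmetric] inner_frame_op integrable_continuous continuous_intros)
  also have "\<dots> = (\<integral>y. 1 \<partial>M)"
    using AE_norm_eq_1
    by (intro integral_cong_AE) (auto simp: euclidean_inner[symmetric] norm_eq_1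
        intro!: borel_measurable_continuous_on_UNIV sets_eq_borel continuous_intros)
  finally show ?thesis
    by (simp add: prob_space)
qed

lemma integral_inner_frame_op: "(\<integral>a. a \<bullet> frame_op a \<partial>M) = frame_potential"
proof -
  have "a \<bullet> frame_op a = (\<Sum>i\<in>Basis. (a \<bullet> i) * (a \<bullet> frame_op i))" for a
    by (subst euclidean_inner) (simp add: frame_op_sym)
  then have "(\<integral>a. a \<bullet> frame_op a \<partial>M) = (\<integral>a. (\<Sum>i\<in>Basis. (a \<bullet> i) * (a \<bullet> frame_op i)) \<partial>M)"
    by simp
  also have "\<dots> = frame_potential"
    by (simp add: frame_potential_def inner_frame_op integrable_continuous continuous_intros)
  finally show ?thesis .
qed

lemma sum_sq_dist_frame_op_scaled_id:
  "(\<Sum>i\<in>Basis. (norm (frame_op i - i /\<^sub>R DIM('a)))\<^sup>2) = frame_potential - 1 / DIM('a)"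
proof -
  have "(norm (frame_op i - i /\<^sub>R DIM('a)))\<^sup>2
      = frame_op i \<bullet> frame_op i - 2 / DIM('a) * (i \<bullet> frame_op i) + 1 / DIM('a)\<^sup>2"
    if "i \<in> Basis" for i :: 'a
    using that by (simp only: power2_norm_eq_inner)
      (simp add: inner_diff inner_commute inner_Basis power2_eq_square field_simps)
  then have "(\<Sum>i\<in>Basis. (norm (frame_op i - i /\<^sub>R DIM('a)))\<^sup>2)
      = frame_potential - 2 / DIM('a) * (\<Sum>i\<in>Basis. i \<bullet> frame_op i) + DIM('a) * (1 / DIM('a)\<^sup>2)"
    by (simp add: frame_potential_def sum.distrib sum_subtractf sum_distrib_left)
  then show ?thesis
    by (simp add: trace_frame_op power2_eq_square)
qed

lemma frame_potential_ge: "1 / DIM('a) \<le> frame_potential"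
  using sum_sq_dist_frame_op_scaled_id
    sum_nonneg[of Basis "\<lambda>i. (norm (frame_op i - i /\<^sub>R DIM('a)))\<^sup>2"]
  by simp

lemma frame_op_eq_scaled_id:
  assumes "frame_potential = 1 / DIM('a)"
  shows "frame_op u = u /\<^sub>R DIM('a)"
proof -
  have "\<forall>i\<in>Basis. (norm (frame_op i - i /\<^sub>R DIM('a)))\<^sup>2 = 0"
    using assms sum_sq_dist_frame_op_scaled_id by (subst sum_nonneg_eq_0_iff[symmetric]) auto
  then have "frame_op = (\<lambda>u. u /\<^sub>R DIM('a))"
    by (intro linear_eq_stdbasis linear_frame_op linear_scaleR) auto
  then show ?thesis
    by simp
qed

lemma integral_triple_inner:
  "(\<integral>a. \<integral>b. \<integral>c. (a \<bullet> b) * (a \<bullet> c) * (b \<bullet> c) \<partial>M \<partial>M \<partial>M) = (\<integral>a. frame_op a \<bullet> frame_op a \<partial>M)"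
proof -
  have "(a \<bullet> b) * (a \<bullet> c) * (b \<bullet> c) = (b \<bullet> a) * ((c \<bullet> a) * (c \<bullet> b))" for a b c :: 'a
    by (simp add: inner_commute)
  then have "(\<integral>c. (a \<bullet> b) * (a \<bullet> c) * (b \<bullet> c) \<partial>M) = (b \<bullet> a) * (b \<bullet> frame_op a)" for a b
    by (simp add: inner_frame_op inner_commute[of b "frame_op a"])
  moreover have "(\<integral>b. (b \<bullet> a) * (b \<bullet> frame_op a) \<partial>M) = frame_op a \<bullet> frame_op a" for a
    by (simp add: inner_frame_op)
  ultimately show ?thesis
    by simp
qed

lemma frame_potential_sq_le_integral_triple_inner:
  "frame_potential\<^sup>2 \<le> (\<integral>a. \<integral>b. \<integral>c. (a \<bullet> b) * (a \<bullet> c) * (b \<bullet> c) \<partial>M \<partial>M \<partial>M)"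
proof -
  have "frame_potential\<^sup>2 = (\<integral>a. a \<bullet> frame_op a \<partial>M)\<^sup>2"
    by (simp add: integral_inner_frame_op)
  also have "\<dots> \<le> (\<integral>a. (a \<bullet> frame_op a)\<^sup>2 \<partial>M)"
    by (intro square_integral_le_integral_square integrable_continuous continuous_intros)
  also have "\<dots> \<le> (\<integral>a. frame_op a \<bullet> frame_op a \<partial>M)"
  proof (intro integral_mono_AE integrable_continuous continuous_intros)
    show "AE a in M. (a \<bullet> frame_op a)\<^sup>2 \<le> frame_op a \<bullet> frame_op a"
      using AE_norm_eq_1
    proof eventually_elim
      fix a :: 'a assume "norm a = 1"
      then show "(a \<bullet> frame_op a)\<^sup>2 \<le> frame_op a \<bullet> frame_op a"
        using Cauchy_Schwarz_ineq[of a "frame_op a"] by (simp add: norm_eq_1)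
    qed
  qed
  finally show ?thesis
    by (simp add: integral_triple_inner)
qed

subsection \<open>Measures of small energy\<close>

lemma frame_energy3_eq_integral:
  "frame_energy3 M = ennreal (\<integral>a. \<integral>b. \<integral>c. \<bar>(a \<bullet> b) * (a \<bullet> c) * (b \<bullet> c)\<bar> \<partial>M \<partial>M \<partial>M)"
  unfolding frame_energy3_def
  by (rule nn_integral_iterated_eq_integral) (auto simp: case_prod_unfold intro!: continuous_intros)

lemma
  assumes "frame_energy3 M \<le> ennreal (1 / DIM('a)\<^sup>2)"
  shows AE_triple_inner_nonneg_if_frame_energy3_le:
      "AE a in M. AE b in M. AE c in M. 0 \<le> (a \<bullet> b) * (a \<bullet> c) * (b \<bullet> c)"
    and frame_op_eq_scaled_id_if_frame_energy3_le: "frame_op u = u /\<^sub>R DIM('a)"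
proof -
  define T where "T a b c = (a \<bullet> b) * (a \<bullet> c) * (b \<bullet> c)" for a b c :: 'a
  define D where "D = (\<integral>a. \<integral>b. \<integral>c. \<bar>T a b c\<bar> - T a b c \<partial>M \<partial>M \<partial>M)"
  have cont_T: "continuous_on UNIV (\<lambda>((a, b), c). T a b c)"
    and cont_abs_T: "continuous_on UNIV (\<lambda>((a, b), c). \<bar>T a b c\<bar>)"
    and cont_D: "continuous_on UNIV (\<lambda>((a, b), c). \<bar>T a b c\<bar> - T a b c)"
    unfolding T_def case_prod_unfold by (intro continuous_intros)+
  have "D = (\<integral>a. \<integral>b. \<integral>c. \<bar>T a b c\<bar> \<partial>M \<partial>M \<partial>M) - (\<integral>a. \<integral>b. \<integral>c. T a b c \<partial>M \<partial>M \<partial>M)"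
    unfolding D_def
    by (simp add: integrable_iterated_1[OF cont_T] integrable_iterated_1[OF cont_abs_T]
        integrable_iterated_2[OF cont_T] integrable_iterated_2[OF cont_abs_T]
        integrable_iterated_3[OF cont_T] integrable_iterated_3[OF cont_abs_T])
  moreover have "(\<integral>a. \<integral>b. \<integral>c. \<bar>T a b c\<bar> \<partial>M \<partial>M \<partial>M) \<le> 1 / DIM('a)\<^sup>2"
    using assms by (simp add: frame_energy3_eq_integral T_def integral_nonneg ennreal_le_iff)
  moreover have "frame_potential\<^sup>2 \<le> (\<integral>a. \<integral>b. \<integral>c. T a b c \<partial>M \<partial>M \<partial>M)"
    unfolding T_def by (rule frame_potential_sq_le_integral_triple_inner)
  moreover have "(1 / DIM('a))\<^sup>2 \<le> frame_potential\<^sup>2"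
    using frame_potential_ge by (rule power_mono) simp
  moreover have "0 \<le> D"
    unfolding D_def by (simp add: integral_nonneg)
  ultimately have "D = 0" and "frame_potential\<^sup>2 \<le> (1 / DIM('a))\<^sup>2"
    by (simp_all add: power_divide)
  have "AE a in M. AE b in M. AE c in M. \<bar>T a b c\<bar> - T a b c = 0"
    using \<open>D = 0\<close> unfolding D_def by (intro AE_iterated_eq_0[OF cont_D]) auto
  moreover have "\<bar>t\<bar> - t = 0 \<longleftrightarrow> 0 \<le> t" for t :: real
    by auto
  ultimately show "AE a in M. AE b in M. AE c in M. 0 \<le> (a \<bullet> b) * (a \<bullet> c) * (b \<bullet> c)"
    unfolding T_def by simp
  have "frame_potential \<le> 1 / DIM('a)"
    using \<open>frame_potential\<^sup>2 \<le> (1 / DIM('a))\<^sup>2\<close> by (rule power2_le_imp_le) simp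
  with frame_potential_ge show "frame_op u = u /\<^sub>R DIM('a)"
    by (intro frame_op_eq_scaled_id antisym)
qed

lemma triple_inner_nonneg_on_support:
  assumes "AE a in M. AE b in M. AE c in M. 0 \<le> (a \<bullet> b) * (a \<bullet> c) * (b \<bullet> c)"
    and "a \<in> msupport M" "b \<in> msupport M" "c \<in> msupport M"
  shows "0 \<le> (a \<bullet> b) * (a \<bullet> c) * (b \<bullet> c)"
proof -
  let ?S = "msupport M"
  let ?T = "\<lambda>a b c. (a \<bullet> b) * (a \<bullet> c) * (b \<bullet> c)"
  have closed_1: "closed {c. 0 \<le> ?T a b c}" for a b
    by (intro closed_Collect_le continuous_intros)
  have closed_2: "closed {b. \<forall>c\<in>?S. 0 \<le> ?T a b c}" for a
    unfolding Ball_def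
    by (intro closed_Collect_all closed_Collect_imp open_Collect_const closed_Collect_le
        continuous_intros)
  have closed_3: "closed {a. \<forall>b\<in>?S. \<forall>c\<in>?S. 0 \<le> ?T a b c}"
    unfolding Ball_def
    by (intro closed_Collect_all closed_Collect_imp open_Collect_const closed_Collect_le
        continuous_intros)
  from assms(1) have "AE a in M. AE b in M. \<forall>c\<in>?S. 0 \<le> ?T a b c"
    by (elim eventually_mono) (use AE_closed_imp_support[OF _ closed_1] in blast)
  then have "AE a in M. \<forall>b\<in>?S. \<forall>c\<in>?S. 0 \<le> ?T a b c"
    by (elim eventually_mono) (use AE_closed_imp_support[OF _ closed_2] in blast)
  then have "\<forall>a\<in>?S. \<forall>b\<in>?S. \<forall>c\<in>?S. 0 \<le> ?T a b c"
    using AE_closed_imp_support[OF _ closed_3] by blast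
  with assms(2-4) show ?thesis
    by blast
qed

subsection \<open>Support points without orthogonal partner\<close>

context
  fixes x :: 'a
  assumes tight: "\<And>u. frame_op u = u /\<^sub>R DIM('a)"
    and triple_nonneg: "\<And>a b c. a \<in> msupport M \<Longrightarrow> b \<in> msupport M \<Longrightarrow> c \<in> msupport M \<Longrightarrow>
      0 \<le> (a \<bullet> b) * (a \<bullet> c) * (b \<bullet> c)"
    and in_support: "x \<in> msupport M"
    and not_orthogonal: "\<And>y. y \<in> msupport M \<Longrightarrow> x \<bullet> y \<noteq> 0"
begin

definition signed_mean :: 'a where
  "signed_mean = (\<integral>y. sgn (x \<bullet> y) *\<^sub>R y \<partial>M)"

lemma inner_frame_op_unit: "norm u = 1 \<Longrightarrow> u \<bullet> frame_op u = 1 / DIM('a)"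
  by (simp add: tight norm_eq_1 divide_inverse)

lemma integrable_signed: "integrable M (\<lambda>y. sgn (x \<bullet> y) *\<^sub>R y)"
proof (rule integrable_bounded_on_sphere[where B = 1])
  show "(\<lambda>y. sgn (x \<bullet> y) *\<^sub>R y) \<in> borel_measurable M"
    by (intro borel_measurable_scaleR borel_measurable_sgn_inner borel_measurable_continuous_on_UNIV
        sets_eq_borel continuous_on_id)
qed (simp add: sgn_real_def)

lemma integral_sgn_mult_inner: "(\<integral>y. sgn (x \<bullet> y) * (v \<bullet> y) \<partial>M) = v \<bullet> signed_mean"
  using integral_inner_right[where c = v and f = "\<lambda>y. sgn (x \<bullet> y) *\<^sub>R y"] integrable_signed
  by (simp add: signed_mean_def)

lemma inner_signed_mean_le: "signed_mean \<bullet> signed_mean \<le> 1 / DIM('a)"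
proof -
  let ?m = signed_mean
  have int: "integrable M (\<lambda>y. sgn (x \<bullet> y) * (?m \<bullet> y))"
    using integrable_inner_right[OF integrable_signed, of ?m] by simp
  have int_sq: "integrable M (\<lambda>y. (sgn (x \<bullet> y) * (?m \<bullet> y))\<^sup>2)"
  proof (rule integrable_bounded_on_sphere[where B = "(norm ?m)\<^sup>2"])
    fix y :: 'a assume "norm y = 1"
    then have "\<bar>sgn (x \<bullet> y) * (?m \<bullet> y)\<bar> \<le> norm ?m"
      using abs_sgn_mult_le[of "x \<bullet> y" "?m \<bullet> y"] Cauchy_Schwarz_ineq2[of ?m y] by simp
    then show "norm ((sgn (x \<bullet> y) * (?m \<bullet> y))\<^sup>2) \<le> (norm ?m)\<^sup>2"
      using power_mono[OF _ abs_ge_zero, of _ _ 2] by fastforce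
  qed measurable
  have "(?m \<bullet> ?m)\<^sup>2 = (\<integral>y. sgn (x \<bullet> y) * (?m \<bullet> y) \<partial>M)\<^sup>2"
    by (simp add: integral_sgn_mult_inner)
  also have "\<dots> \<le> (\<integral>y. (sgn (x \<bullet> y) * (?m \<bullet> y))\<^sup>2 \<partial>M)"
    using int int_sq by (rule square_integral_le_integral_square)
  also have "\<dots> \<le> (\<integral>y. (y \<bullet> ?m) * (y \<bullet> ?m) \<partial>M)"
  proof (rule integral_mono[OF int_sq])
    show "integrable M (\<lambda>y. (y \<bullet> ?m) * (y \<bullet> ?m))"
      by (intro integrable_continuous continuous_intros)
    show "(sgn (x \<bullet> y) * (?m \<bullet> y))\<^sup>2 \<le> (y \<bullet> ?m) * (y \<bullet> ?m)" for y
      using abs_sgn_mult_le[of "x \<bullet> y" "?m \<bullet> y"]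
      by (simp add: abs_le_square_iff inner_commute power2_eq_square)
  qed
  also have "\<dots> = (?m \<bullet> ?m) / DIM('a)"
    by (simp add: inner_frame_op[symmetric] tight field_simps)
  finally have "(?m \<bullet> ?m) * (?m \<bullet> ?m) \<le> (?m \<bullet> ?m) * (1 / DIM('a))"
    by (simp add: power2_eq_square)
  then show ?thesis
    using mult_left_le_imp_le[of "?m \<bullet> ?m" "?m \<bullet> ?m" "1 / DIM('a)"]
    by (cases "?m \<bullet> ?m = 0") auto
qed

lemma signed_mean_lower_bound:
  assumes b: "b \<in> msupport M"
  shows "1 / DIM('a) \<le> sgn (x \<bullet> b) * (b \<bullet> signed_mean)"
proof -
  have "AE c in M. 0 \<le> sgn (x \<bullet> b) * (sgn (x \<bullet> c) * (b \<bullet> c)) - (c \<bullet> b) * (c \<bullet> b)"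
    using AE_in_support
  proof eventually_elim
    fix c assume c: "c \<in> msupport M"
    define p where "p = sgn (x \<bullet> b) * sgn (x \<bullet> c) * (b \<bullet> c)"
    have "0 \<le> p"
      unfolding p_def by (intro sgn_mult_sgn_mult_nonneg triple_nonneg in_support b c)
    moreover have "\<bar>b \<bullet> c\<bar> \<le> 1"
      using Cauchy_Schwarz_ineq2[of b c] norm_in_support[OF b] norm_in_support[OF c] by simp
    moreover have "\<bar>p\<bar> = \<bar>b \<bullet> c\<bar>"
      using not_orthogonal[OF b] not_orthogonal[OF c] by (simp add: p_def abs_mult sgn_real_def)
    ultimately have "p * p \<le> p"
      using mult_left_le[of p p] by simp
    moreover have "p * p = (c \<bullet> b) * (c \<bullet> b)"
      using \<open>\<bar>p\<bar> = \<bar>b \<bullet> c\<bar>\<close> by (metis abs_mult_self_eq inner_commute)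
    ultimately show "0 \<le> sgn (x \<bullet> b) * (sgn (x \<bullet> c) * (b \<bullet> c)) - (c \<bullet> b) * (c \<bullet> b)"
      by (simp add: p_def mult.assoc)
  qed
  then have "0 \<le> (\<integral>c. sgn (x \<bullet> b) * (sgn (x \<bullet> c) * (b \<bullet> c)) - (c \<bullet> b) * (c \<bullet> b) \<partial>M)"
    by (rule integral_nonneg_AE)
  also have "\<dots> = sgn (x \<bullet> b) * (b \<bullet> signed_mean) - b \<bullet> frame_op b"
    using integrable_inner_right[OF integrable_signed, of b]
    by (simp add: integral_sgn_mult_inner inner_commute[of b "frame_op b"] inner_frame_op
        integrable_continuous continuous_intros)
  also have "b \<bullet> frame_op b = 1 / DIM('a)"
    using norm_in_support[OF b] by (rule inner_frame_op_unit)
  finally show ?thesis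
    by simp
qed

lemma inner_signed_mean: "x \<bullet> signed_mean = 1 / DIM('a)"
proof -
  let ?m = signed_mean
  define h where "h b = sgn (x \<bullet> b) * (?m \<bullet> b) - 1 / DIM('a)" for b
  have h_nonneg: "AE b in M. 0 \<le> h b"
    using AE_in_support
  proof eventually_elim
    fix b assume "b \<in> msupport M"
    then show "0 \<le> h b"
      using signed_mean_lower_bound[of b] by (simp add: h_def inner_commute)
  qed
  have int_h: "integrable M h"
    unfolding h_def using integrable_inner_right[OF integrable_signed, of ?m] by auto
  have "integral\<^sup>L M h = ?m \<bullet> ?m - 1 / DIM('a)"
    using integrable_inner_right[OF integrable_signed, of ?m]
    unfolding h_def by (simp add: integral_sgn_mult_inner prob_space)
  then have "integral\<^sup>L M h = 0"
    using inner_signed_mean_le integral_nonneg_AE[OF h_nonneg] by linarith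
  then have "AE b in M. h b = 0"
    using integral_nonneg_eq_0_iff_AE[OF int_h h_nonneg] by simp
  then have "AE b in M. x \<bullet> b \<le> 0 \<or> ?m \<bullet> b = 1 / DIM('a)"
  proof eventually_elim
    fix b assume "h b = 0"
    show "x \<bullet> b \<le> 0 \<or> ?m \<bullet> b = 1 / DIM('a)"
    proof (cases "x \<bullet> b \<le> 0")
      case False
      then have "sgn (x \<bullet> b) = 1"
        by simp
      with \<open>h b = 0\<close> have "?m \<bullet> b = 1 / DIM('a)"
        unfolding h_def by simp
      then show ?thesis ..
    qed (rule disjI1)
  qed
  then have "x \<bullet> x \<le> 0 \<or> ?m \<bullet> x = 1 / DIM('a)"
    by (rule AE_closed_imp_support[OF _ _ in_support])
      (intro closed_Collect_disj closed_Collect_le closed_Collect_eq continuous_intros)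
  then show ?thesis
    using norm_in_support[OF in_support] by (simp add: norm_eq_1 inner_commute)
qed

lemma AE_abs_inner_eq_1: "AE c in M. \<bar>x \<bullet> c\<bar> = 1"
proof -
  have nonneg: "AE c in M. 0 \<le> \<bar>x \<bullet> c\<bar> - (x \<bullet> c) * (x \<bullet> c)"
    using AE_norm_eq_1
  proof eventually_elim
    fix c :: 'a assume "norm c = 1"
    then have "\<bar>x \<bullet> c\<bar> \<le> 1"
      using Cauchy_Schwarz_ineq2[of x c] norm_in_support[OF in_support] by simp
    then show "0 \<le> \<bar>x \<bullet> c\<bar> - (x \<bullet> c) * (x \<bullet> c)"
      using mult_left_le[of "\<bar>x \<bullet> c\<bar>" "\<bar>x \<bullet> c\<bar>"] by (simp add: abs_mult_self_eq)
  qed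
  have int: "integrable M (\<lambda>c. \<bar>x \<bullet> c\<bar>)" "integrable M (\<lambda>c. (x \<bullet> c) * (x \<bullet> c))"
    by (intro integrable_continuous continuous_intros)+
  have "sgn t * t = \<bar>t\<bar>" for t :: real
    by (simp add: sgn_real_def)
  then have "(\<integral>c. \<bar>x \<bullet> c\<bar> \<partial>M) = 1 / DIM('a)"
    using integral_sgn_mult_inner[of x] by (simp add: inner_signed_mean)
  moreover have "(\<integral>c. (x \<bullet> c) * (x \<bullet> c) \<partial>M) = 1 / DIM('a)"
    using inner_frame_op[of x x] inner_frame_op_unit[OF norm_in_support[OF in_support]]
    by (simp add: inner_commute)
  ultimately have "(\<integral>c. \<bar>x \<bullet> c\<bar> - (x \<bullet> c) * (x \<bullet> c) \<partial>M) = 0"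
    using int by simp
  then have "AE c in M. \<bar>x \<bullet> c\<bar> - (x \<bullet> c) * (x \<bullet> c) = 0"
    using integral_nonneg_eq_0_iff_AE[OF _ nonneg] int by simp
  then show ?thesis
    using AE_in_support
  proof eventually_elim
    fix c assume "\<bar>x \<bullet> c\<bar> - (x \<bullet> c) * (x \<bullet> c) = 0" and c: "c \<in> msupport M"
    then have "\<bar>x \<bullet> c\<bar> * \<bar>x \<bullet> c\<bar> = \<bar>x \<bullet> c\<bar> * 1"
      by (simp only: abs_mult_self_eq mult_1_right)
    moreover have "\<bar>x \<bullet> c\<bar> \<noteq> 0"
      using not_orthogonal[OF c] by simp
    ultimately show "\<bar>x \<bullet> c\<bar> = 1"
      using mult_left_cancel by blast
  qed
qed

lemma DIM_eq_1: "DIM('a) = 1"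
proof -
  have "AE c in M. (c \<bullet> x) * (c \<bullet> x) = 1"
    using AE_abs_inner_eq_1 by eventually_elim (metis abs_mult_self_eq inner_commute mult_1)
  then have "frame_op x \<bullet> x = (\<integral>c. 1 \<partial>M)"
    unfolding inner_frame_op
    by (intro integral_cong_AE) (auto intro!: borel_measurable_continuous_on_UNIV sets_eq_borel continuous_intros)
  then show ?thesis
    using inner_frame_op_unit[OF norm_in_support[OF in_support]]
    by (simp add: inner_commute prob_space)
qed

end

lemma exists_orthogonal_in_support:
  assumes "2 \<le> DIM('a)"
    and tight: "\<And>u. frame_op u = u /\<^sub>R DIM('a)"
    and triple_nonneg: "\<And>a b c. a \<in> msupport M \<Longrightarrow> b \<in> msupport M \<Longrightarrow> c \<in> msupport M \<Longrightarrow>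
      0 \<le> (a \<bullet> b) * (a \<bullet> c) * (b \<bullet> c)"
    and "x \<in> msupport M"
  shows "\<exists>y\<in>msupport M. x \<bullet> y = 0"
  using DIM_eq_1[OF tight triple_nonneg \<open>x \<in> msupport M\<close>] assms(1) by force

end

subsection \<open>The uniform measure on an orthonormal basis\<close>

definition uniform_Basis :: "'a::euclidean_space measure" where
  "uniform_Basis = distr (measure_pmf (pmf_of_set Basis)) borel id"

lemma integral_uniform_Basis:
  fixes g :: "'a::euclidean_space \<Rightarrow> real"
  assumes "continuous_on UNIV g"
  shows "integral\<^sup>L uniform_Basis g = (\<Sum>i\<in>Basis. g i) / DIM('a)"
  using borel_measurable_continuous_onI[OF assms]
  by (simp add: uniform_Basis_def integral_distr integral_pmf_of_set)

lemma sphere_borel_prob_uniform_Basis: "sphere_borel_prob (uniform_Basis :: 'a::euclidean_space measure)"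
proof -
  have "set_pmf (pmf_of_set (Basis :: 'a set)) \<subseteq> sphere 0 1"
    by auto
  then have "emeasure (measure_pmf (pmf_of_set (Basis :: 'a set))) (sphere 0 1) = 1"
    by (simp add: measure_pmf.emeasure_eq_1_AE AE_measure_pmf_iff subset_iff)
  then show ?thesis
    unfolding sphere_borel_prob_def uniform_Basis_def
    by (simp add: emeasure_distr measure_pmf.prob_space_distr)
qed

lemma frame_energy3_uniform_Basis:
  "frame_energy3 (uniform_Basis :: 'a::euclidean_space measure) = ennreal (1 / DIM('a)\<^sup>2)"
proof -
  interpret sphere_prob_space "uniform_Basis :: 'a measure"
    by unfold_locales (rule sphere_borel_prob_uniform_Basis)
  let ?d = "real DIM('a)"
  let ?T = "\<lambda>a b c :: 'a. \<bar>(a \<bullet> b) * (a \<bullet> c) * (b \<bullet> c)\<bar>"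
  have inner: "(\<integral>c. ?T a b c \<partial>uniform_Basis) = (\<Sum>c\<in>Basis. ?T a b c) / ?d" for a b
    by (rule integral_uniform_Basis) (intro continuous_intros)
  have middle: "(\<integral>b. (\<Sum>c\<in>Basis. ?T a b c) / ?d \<partial>uniform_Basis)
      = (\<Sum>b\<in>Basis. \<Sum>c\<in>Basis. ?T a b c) / ?d\<^sup>2" for a
    by (subst integral_uniform_Basis)
      (auto intro!: continuous_intros simp: power2_eq_square sum_divide_distrib)
  have outer: "(\<integral>a. (\<Sum>b\<in>Basis. \<Sum>c\<in>Basis. ?T a b c) / ?d\<^sup>2 \<partial>uniform_Basis)
      = (\<Sum>a\<in>Basis. \<Sum>b\<in>Basis. \<Sum>c\<in>Basis. ?T a b c) / ?d ^ 3"
    by (subst integral_uniform_Basis)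
      (auto intro!: continuous_intros simp: power3_eq_cube power2_eq_square sum_divide_distrib)
  have "(\<Sum>c\<in>Basis. ?T a b c) = (if a = b then 1 else 0)" if "a \<in> Basis" "b \<in> Basis" for a b
    using that
    by (cases "a = b") (simp_all add: inner_Basis if_distrib[of "\<lambda>t. t * _"] cong: if_cong)
  then have "(\<Sum>b\<in>Basis. \<Sum>c\<in>Basis. ?T a b c) = 1" if "a \<in> Basis" for a
    using that by (simp add: sum.delta)
  then have "(\<Sum>a\<in>Basis. \<Sum>b\<in>Basis. \<Sum>c\<in>Basis. ?T a b c) = ?d"
    by simp
  then have "(\<integral>a. \<integral>b. \<integral>c. ?T a b c \<partial>uniform_Basis \<partial>uniform_Basis \<partial>uniform_Basis) = 1 / ?d\<^sup>2"
    by (simp only: inner middle outer) (simp add: power3_eq_cube power2_eq_square)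
  then show ?thesis
    by (simp add: frame_energy3_eq_integral)
qed

theorem lemma6p1:
  fixes \<mu> :: "'a::euclidean_space measure"
  assumes "DIM('a) \<ge> 2"
    and "sphere_borel_prob \<mu>"
    and "\<And>\<nu> :: 'a measure. sphere_borel_prob \<nu> \<Longrightarrow> frame_energy3 \<mu> \<le> frame_energy3 \<nu>"
  shows "\<forall>x\<in>msupport \<mu>. \<exists>y\<in>msupport \<mu>. x \<bullet> y = 0"
proof
  fix x assume x: "x \<in> msupport \<mu>"
  interpret sphere_prob_space \<mu>
    by unfold_locales (fact assms(2))
  have energy_le: "frame_energy3 \<mu> \<le> ennreal (1 / DIM('a)\<^sup>2)"
    using assms(3)[OF sphere_borel_prob_uniform_Basis] by (simp add: frame_energy3_uniform_Basis)
  show "\<exists>y\<in>msupport \<mu>. x \<bullet> y = 0"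
  proof (rule exists_orthogonal_in_support[OF assms(1) _ _ x])
    show "frame_op u = u /\<^sub>R DIM('a)" for u
      using energy_le by (rule frame_op_eq_scaled_id_if_frame_energy3_le)
    show "0 \<le> (a \<bullet> b) * (a \<bullet> c) * (b \<bullet> c)"
      if "a \<in> msupport \<mu>" "b \<in> msupport \<mu>" "c \<in> msupport \<mu>" for a b c
      using AE_triple_inner_nonneg_if_frame_energy3_le[OF energy_le] that
      by (rule triple_inner_nonneg_on_support)
  qed
qed

end
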